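(* Let $\mathcal{I}$ be a finite set of closed intervals whose $2|\mathcal{I}|$ start- and endpoints are pairwise distinct, let $k\ge 1$, and let $X$ (the set of intervals of $\mathcal{I}$ together with all virtual elements) and $\mathcal{S}$ be produced by the construction described in the context. If $\chi:X\to\{1,\dots,k\}$ is a coloring such that, for every constraint $S\in\mathcal{S}$, any two distinct elements of $S$ receive distinct colors, then the restriction of $\chi$ to $\mathcal{I}$ is a balanced $k$-coloring of $\mathcal{I}$.
   Context: For a finite set $\mathcal{I}$ of closed intervals, a $k$-coloring is a map $\chi:\mathcal{I}\to\{1,\dots,k\}$; with $c_i(x)$ the number of intervals containing $x$ of color $i$, the coloring is balanced if $\max_{x\in\mathbb{R}}\max_{i,j}|c_i(x)-c_j(x)|\le 1$. Construction. The events are the start- and endpoints of the intervals, scanned in increasing order. We maintain a list of active events (initially empty), a growing ground set $X$ (initially $\mathcal{I}$) and a family $\mathcal{S}$ of constraints (subsets/tuples of $X$, initially empty). Whenever the active list is empty, the type of the next event (start or end) fixes the type of the current phase. Start phase: startpoints are appended to the active list. (a) If the active list contains startpoints of $k$ elements $I_1,\dots,I_k$ (actual intervals or virtual elements), add the constraint $(I_1,\dots,I_k)$ to $\mathcal{S}$ and clear the active list. (b) If the active list contains startpoints of $I_1,\dots,I_j$ with $j<k$ and the next event is the endpoint of some interval $I_{j+1}$, create new virtual elements $x_{j+1},\dots,x_k,y_1,\dots,y_{j-1}$ (added to $X$, not used before), add the two constraints $(I_1,\dots,I_j,x_{j+1},\dots,x_k)$ and $(y_1,\dots,y_{j-1},I_{j+1},x_{j+1},\dots,x_k)$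 to $\mathcal{S}$, and replace the active list by the (virtual) startpoints of $y_1,\dots,y_{j-1}$ (the phase remains a start phase; if $j=1$ the list becomes empty). End phase: symmetric, with the roles of start- and endpoints interchanged (endpoints are accumulated; $k$ accumulated endpoints yield one constraint and clear the list; encountering a startpoint of an interval $I_{j+1}$ after $j<k$ accumulated endpoints yields the two analogous constraints with fresh virtual elements and the list is replaced by virtual endpoints of $y_1,\dots,y_{j-1}$). *)

theory Defs
  imports Complex_Main "HOL-Library.Product_Lexorder"
begin

text \<open>A closed interval [a,b] is represented by the pair (a,b) with a \<le> b.
  Elements of the ground set X are either actual intervals (Inl) or
  virtual elements (Inr n), virtual elements being numbered by fresh naturals.\<close>

type_synonym ivl = "real \<times> real"
type_synonym elem = "ivl + nat"

definition endpoint :: "ivl \<times> bool \<Rightarrow> real" where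
  "endpoint p = (if snd p then fst (fst p) else snd (fst p))"

text \<open>Events: (position, is_startpoint, interval), scanned in increasing order.\<close>
definition events :: "ivl set \<Rightarrow> (bool \<times> ivl) list" where
  "events I = map (\<lambda>(p, t, J). (t, J))
     (sorted_list_of_set ((\<lambda>J. (fst J, True, J)) ` I \<union> (\<lambda>J. (snd J, False, J)) ` I))"

text \<open>State: (phase (True = start phase), active list, next fresh virtual index,
  constraints so far).  One scan step.\<close>
fun step :: "nat \<Rightarrow> bool \<times> elem list \<times> nat \<times> elem list list \<Rightarrow> bool \<times> ivl
               \<Rightarrow> bool \<times> elem list \<times> nat \<times> elem list list" where
  "step k (ph, act, n, S) (t, J) =
    (let ph' = (if act = [] then t else ph) in
     if t = ph' then
       (let act' = act @ [Inl J] in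
        if length act' = k then (ph', [], n, S @ [act']) else (ph', act', n, S))
     else
       (let j = length act;
            xs = map Inr [n..<n + (k - j)];
            ys = map Inr [n + (k - j)..<n + (k - j) + (j - 1)] in
        (ph', ys, n + (k - j) + (j - 1), S @ [act @ xs, ys @ [Inl J] @ xs])))"

definition construction :: "nat \<Rightarrow> ivl set \<Rightarrow> bool \<times> elem list \<times> nat \<times> elem list list" where
  "construction k I = foldl (step k) (True, [], 0, []) (events I)"

definition constr_X :: "nat \<Rightarrow> ivl set \<Rightarrow> elem set" where
  "constr_X k I = Inl ` I \<union> Inr ` {0..<fst (snd (snd (construction k I)))}"

definition constr_S :: "nat \<Rightarrow> ivl set \<Rightarrow> elem list set" where
  "constr_S k I = set (snd (snd (snd (construction k I))))"

definition color_count :: "ivl set \<Rightarrow> (ivl \<Rightarrow> nat) \<Rightarrow> nat \<Rightarrow> real \<Rightarrow> nat" where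
  "color_count I \<chi> i x = card {J \<in> I. \<chi> J = i \<and> fst J \<le> x \<and> x \<le> snd J}"

definition balanced_coloring :: "ivl set \<Rightarrow> nat \<Rightarrow> (ivl \<Rightarrow> nat) \<Rightarrow> bool" where
  "balanced_coloring I k \<chi> \<longleftrightarrow>
     (\<forall>J\<in>I. \<chi> J \<in> {1..k}) \<and>
     (\<forall>x::real. \<forall>i\<in>{1..k}. \<forall>j\<in>{1..k}.
        \<bar>int (color_count I \<chi> i x) - int (color_count I \<chi> j x)\<bar> \<le> 1)"

end

theory Submission
  imports Defs
begin

text \<open>
  The net count of colour i in a prefix of the event list is the number of startpoints minus
  the number of endpoints of intervals of colour i among these events. Every constraint consists
  of k distinct elements, so under the hypothesis it contains each colour exactly once.
  Completing a constraint therefore shifts all net counts by the same amount, and at a phase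
  change the two new constraints share their virtual part, so trading the active list for the
  y's again moves all net counts in step. Hence the net counts always equal a common value plus
  (start phase) or minus (end phase) the multiplicity of the colour in the active list. Since
  every interval both starts and ends, this forces the final active list to be empty; so every
  active list is a prefix of a constraint, each colour occurs in it at most once, and the net
  counts differ by at most one. As the endpoints are distinct, the colour counts at a point x
  are the net counts of the events up to x if x is a startpoint, and strictly before x otherwise.
\<close>

type_synonym state = "bool \<times> elem list \<times> nat \<times> elem list list"

abbreviation active :: "state \<Rightarrow> elem list" where
  "active st \<equiv> fst (snd st)"

abbreviation constraints :: "state \<Rightarrow> elem list list" where
  "constraints st \<equiv> snd (snd (snd st))"

definition run :: "nat \<Rightarrow> (bool \<times> ivl) list \<Rightarrow> state" where
  "run k es = foldl (step k) (True, [], 0, []) es"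

lemma run_Nil [simp]: "run k [] = (True, [], 0, [])"
  by (simp add: run_def)

lemma run_snoc [simp]: "run k (es @ [e]) = step k (run k es) e"
  by (simp add: run_def)

lemma construction_eq_run: "construction k I = run k (events I)"
  by (simp add: construction_def run_def)

lemma step_same_phase:
  assumes "t = (if act = [] then t else ph)"
  shows "step k (ph, act, n, S) (t, J) =
    (if length act + 1 = k then (t, [], n, S @ [act @ [Inl J]])
     else (t, act @ [Inl J], n, S))"
  using assms by (simp add: Let_def)

lemma step_phase_change:
  fixes k n :: nat and act :: "elem list"
  assumes "t \<noteq> (if act = [] then t else ph)"
  defines "xs \<equiv> map Inr [n..<n + (k - length act)]"
    and "ys \<equiv> map Inr [n + (k - length act)..<n + (k - length act) + (length act - 1)]"
  shows "step k (ph, act, n, S) (t, J) =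
    (ph, ys, n + (k - length act) + (length act - 1), S @ [act @ xs, ys @ [Inl J] @ xs])"
  using assms by (simp add: Let_def split: if_splits)

fun wf_state :: "nat \<Rightarrow> (bool \<times> ivl) list \<Rightarrow> state \<Rightarrow> bool" where
  "wf_state k es (ph, act, n, S) \<longleftrightarrow>
     length act < k \<and> distinct act \<and> set act \<subseteq> Inl ` {J. (ph, J) \<in> set es} \<union> Inr ` {..<n} \<and>
     (\<forall>C\<in>set S. length C = k \<and> distinct C \<and> set C \<subseteq> Inl ` snd ` set es \<union> Inr ` {..<n})"

lemma wf_state_step_same_phase:
  assumes wf: "wf_state k es (ph, act, n, S)" and new: "(t, J) \<notin> set es"
    and same: "t = (if act = [] then t else ph)"
  shows "wf_state k (es @ [(t, J)]) (step k (ph, act, n, S) (t, J))"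
proof -
  let ?es = "es @ [(t, J)]" and ?act = "act @ [Inl J]"
  have act: "set act \<subseteq> Inl ` {J. (t, J) \<in> set es} \<union> Inr ` {..<n}"
    using wf same by (cases "act = []") auto
  with new have "Inl J \<notin> set act" by auto
  with wf have act': "distinct ?act" "length act < k" by simp_all
  from act have act_elems: "set ?act \<subseteq> Inl ` {J'. (t, J') \<in> set ?es} \<union> Inr ` {..<n}"
    by auto
  then have "set ?act \<subseteq> Inl ` snd ` set ?es \<union> Inr ` {..<n}"
    by force
  moreover have "\<forall>C\<in>set S. length C = k \<and> distinct C \<and>
      set C \<subseteq> Inl ` snd ` set ?es \<union> Inr ` {..<n}"
    using wf unfolding wf_state.simps by force
  ultimately show ?thesis
    using act' act_elems unfolding step_same_phase[OF same] by simp
qed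

lemma wf_state_step_phase_change:
  assumes wf: "wf_state k es (ph, act, n, S)" and change: "t \<noteq> (if act = [] then t else ph)"
  shows "wf_state k (es @ [(t, J)]) (step k (ph, act, n, S) (t, J))"
proof -
  define j where "j = length act"
  define xs :: "elem list" where "xs = map Inr [n..<n + (k - j)]"
  define ys :: "elem list" where "ys = map Inr [n + (k - j)..<n + (k - j) + (j - 1)]"
  define n' where "n' = n + (k - j) + (j - 1)"
  have st: "step k (ph, act, n, S) (t, J) = (ph, ys, n', S @ [act @ xs, ys @ [Inl J] @ xs])"
    unfolding step_phase_change[OF change] xs_def ys_def n'_def j_def ..
  have j: "1 \<le> j" "j < k"
    using change wf by (auto simp: j_def Suc_le_eq split: if_splits)
  have xs: "distinct xs" "set xs = Inr ` {n..<n + (k - j)}" "length xs = k - j"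
    by (auto simp: xs_def distinct_map)
  have ys: "distinct ys" "set ys = Inr ` {n + (k - j)..<n'}" "length ys = j - 1"
    by (auto simp: ys_def n'_def distinct_map)
  have "Inl ` snd ` set es \<union> Inr ` {..<n} \<subseteq> Inl ` snd ` set (es @ [(t, J)]) \<union> Inr ` {..<n'}"
    by (intro Un_mono image_mono) (auto simp: n'_def)
  then have old: "\<forall>C\<in>set S. length C = k \<and> distinct C \<and>
      set C \<subseteq> Inl ` snd ` set (es @ [(t, J)]) \<union> Inr ` {..<n'}"
    using wf unfolding wf_state.simps by (meson order_trans)
  have "set act \<subseteq> Inl ` snd ` set (es @ [(t, J)]) \<union> Inr ` {..<n}"
    using wf unfolding wf_state.simps by force
  moreover have "distinct act" "length act = j"
    using wf by (simp_all add: j_def)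
  ultimately have "length (act @ xs) = k" "distinct (act @ xs)"
    "set (act @ xs) \<subseteq> Inl ` snd ` set (es @ [(t, J)]) \<union> Inr ` {..<n'}"
    using xs j by (auto simp: n'_def)
  moreover have "length (ys @ [Inl J] @ xs) = k" "distinct (ys @ [Inl J] @ xs)"
    "set (ys @ [Inl J] @ xs) \<subseteq> Inl ` snd ` set (es @ [(t, J)]) \<union> Inr ` {..<n'}"
    using xs ys j by (auto simp: n'_def)
  moreover have "set ys \<subseteq> Inr ` {..<n'}"
    using ys by auto
  ultimately show ?thesis
    using old ys j unfolding st wf_state.simps by auto
qed

lemma wf_state_step:
  assumes "wf_state k es st" and "e \<notin> set es"
  shows "wf_state k (es @ [e]) (step k st e)"
proof -
  obtain ph act n S where st: "st = (ph, act, n, S)" by (cases st) auto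
  obtain t J where e: "e = (t, J)" by (cases e) auto
  show ?thesis
    using assms unfolding st e by (metis wf_state_step_same_phase wf_state_step_phase_change)
qed

lemma wf_state_run:
  assumes "k \<ge> 1" and "distinct es"
  shows "wf_state k es (run k es)"
  using assms(2)
proof (induction es rule: rev_induct)
  case Nil
  with assms(1) show ?case by simp
next
  case (snoc e es)
  then show ?case by (simp add: wf_state_step)
qed

lemma run_append: "run k (es @ fs) = foldl (step k) (run k es) fs"
  by (simp add: run_def)

lemma constraints_step_extends: "\<exists>Cs. constraints (step k st e) = constraints st @ Cs"
proof -
  obtain ph act n S where st: "st = (ph, act, n, S)" by (cases st) auto
  obtain t J where e: "e = (t, J)" by (cases e) auto
  show ?thesis
  proof (cases "t = (if act = [] then t else ph)")
    case True
    then show ?thesis unfolding st e step_same_phase[OF True] by simp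
  next
    case False
    then show ?thesis unfolding st e step_phase_change[OF False] by simp
  qed
qed

lemma active_step_extends:
  "(\<exists>c. active (step k st e) = active st @ c) \<or>
   (\<exists>c. active st @ c \<in> set (constraints (step k st e)))"
proof -
  obtain ph act n S where st: "st = (ph, act, n, S)" by (cases st) auto
  obtain t J where e: "e = (t, J)" by (cases e) auto
  show ?thesis
  proof (cases "t = (if act = [] then t else ph)")
    case True
    then show ?thesis unfolding st e step_same_phase[OF True] by auto
  next
    case False
    then show ?thesis unfolding st e step_phase_change[OF False] by (simp; blast)
  qed
qed

lemma constraints_foldl_step_extends: "\<exists>Cs. constraints (foldl (step k) st es) = constraints st @ Cs"
proof (induction es arbitrary: st)
  case (Cons e es)
  obtain Cs where "constraints (step k st e) = constraints st @ Cs"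
    using constraints_step_extends by blast
  moreover obtain Ds where "constraints (foldl (step k) (step k st e) es) = constraints (step k st e) @ Ds"
    using Cons.IH by blast
  ultimately show ?case by auto
qed simp

lemma active_foldl_step_extends:
  "(\<exists>c. active (foldl (step k) st es) = active st @ c) \<or>
   (\<exists>c. active st @ c \<in> set (constraints (foldl (step k) st es)))"
proof (induction es arbitrary: st)
  case (Cons e es)
  have later: "set (constraints (step k st e)) \<subseteq> set (constraints (foldl (step k) st (e # es)))"
    using constraints_foldl_step_extends[of k "step k st e" es] by auto
  from active_step_extends[of k st e] show ?case
  proof
    assume "\<exists>c. active (step k st e) = active st @ c"
    then obtain c where c: "active (step k st e) = active st @ c" ..
    from Cons.IH[of "step k st e"] show ?case
    proof
      assume "\<exists>c'. active (foldl (step k) (step k st e) es) = active (step k st e) @ c'"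
      with c show ?case by auto
    next
      assume "\<exists>c'. active (step k st e) @ c' \<in> set (constraints (foldl (step k) (step k st e) es))"
      with c show ?case by auto
    qed
  next
    assume "\<exists>c. active st @ c \<in> set (constraints (step k st e))"
    with later show ?case by auto
  qed
qed simp

definition net_count :: "(elem \<Rightarrow> nat) \<Rightarrow> (bool \<times> ivl) list \<Rightarrow> nat \<Rightarrow> int" where
  "net_count \<chi> es i = (\<Sum>(t, J)\<leftarrow>es. if \<chi> (Inl J) = i then if t then 1 else -1 else 0)"

lemma net_count_Nil [simp]: "net_count \<chi> [] i = 0"
  by (simp add: net_count_def)

lemma net_count_snoc [simp]:
  "net_count \<chi> (es @ [(t, J)]) i = net_count \<chi> es i + (if \<chi> (Inl J) = i then if t then 1 else -1 else 0)"
  by (simp add: net_count_def)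

definition rainbow :: "(elem \<Rightarrow> nat) \<Rightarrow> nat \<Rightarrow> elem list \<Rightarrow> bool" where
  "rainbow \<chi> k C \<longleftrightarrow> length C = k \<and> distinct (map \<chi> C) \<and> set (map \<chi> C) \<subseteq> {1..k}"

lemma count_list_distinct: "distinct xs \<Longrightarrow> count_list xs x = (if x \<in> set xs then 1 else 0)"
  by (induction xs) auto

lemma count_list_rainbow:
  assumes "rainbow \<chi> k C" and "i \<in> {1..k}"
  shows "count_list (map \<chi> C) i = 1"
proof -
  have "card (set (map \<chi> C)) = card {1..k}"
    using assms(1) distinct_card[of "map \<chi> C"] by (simp add: rainbow_def)
  then have "set (map \<chi> C) = {1..k}"
    using assms(1) by (simp add: rainbow_def card_subset_eq)
  with assms show ?thesis
    by (simp add: rainbow_def count_list_distinct)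
qed

fun balanced_state :: "(elem \<Rightarrow> nat) \<Rightarrow> nat \<Rightarrow> (bool \<times> ivl) list \<Rightarrow> state \<Rightarrow> bool" where
  "balanced_state \<chi> k es (ph, act, n, S) \<longleftrightarrow>
     (\<exists>m. \<forall>i\<in>{1..k}.
        net_count \<chi> es i = m + (if ph then 1 else -1) * int (count_list (map \<chi> act) i))"

lemma balanced_state_step_same_phase:
  assumes bal: "balanced_state \<chi> k es (ph, act, n, S)"
    and same: "t = (if act = [] then t else ph)"
    and rb: "\<forall>C\<in>set (constraints (step k (ph, act, n, S) (t, J))). rainbow \<chi> k C"
  shows "balanced_state \<chi> k (es @ [(t, J)]) (step k (ph, act, n, S) (t, J))"
proof -
  let ?s = "if t then 1 else -1 :: int"
  define act' where "act' = act @ [Inl J]"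
  obtain m where "\<forall>i\<in>{1..k}. net_count \<chi> es i = m + ?s * int (count_list (map \<chi> act) i)"
    using bal same by (cases "act = []") auto
  then have new: "\<forall>i\<in>{1..k}. net_count \<chi> (es @ [(t, J)]) i =
      m + ?s * int (count_list (map \<chi> act') i)"
    by (auto simp: act'_def)
  show ?thesis
  proof (cases "length act + 1 = k")
    case True
    then have "rainbow \<chi> k act'"
      using rb unfolding step_same_phase[OF same] act'_def by simp
    with new have "\<forall>i\<in>{1..k}. net_count \<chi> (es @ [(t, J)]) i = m + ?s"
      using count_list_rainbow by simp
    with True show ?thesis
      unfolding step_same_phase[OF same] by auto
  next
    case False
    with new show ?thesis
      unfolding step_same_phase[OF same] act'_def by auto
  qed
qed

lemma balanced_state_step_phase_change:
  assumes bal: "balanced_state \<chi> k es (ph, act, n, S)"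
    and change: "t \<noteq> (if act = [] then t else ph)"
    and rb: "\<forall>C\<in>set (constraints (step k (ph, act, n, S) (t, J))). rainbow \<chi> k C"
  shows "balanced_state \<chi> k (es @ [(t, J)]) (step k (ph, act, n, S) (t, J))"
proof -
  define xs :: "elem list" where "xs = map Inr [n..<n + (k - length act)]"
  define ys :: "elem list"
    where "ys = map Inr [n + (k - length act)..<n + (k - length act) + (length act - 1)]"
  have st: "step k (ph, act, n, S) (t, J) =
      (ph, ys, n + (k - length act) + (length act - 1), S @ [act @ xs, ys @ [Inl J] @ xs])"
    unfolding step_phase_change[OF change] xs_def ys_def ..
  have "rainbow \<chi> k (act @ xs)" "rainbow \<chi> k (ys @ [Inl J] @ xs)"
    using rb unfolding st by simp_all
  then have "count_list (map \<chi> (act @ xs)) i = 1" "count_list (map \<chi> (ys @ [Inl J] @ xs)) i = 1"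
    if "i \<in> {1..k}" for i
    using count_list_rainbow that by blast+
  then have ys: "int (count_list (map \<chi> ys) i) =
      int (count_list (map \<chi> act) i) - (if \<chi> (Inl J) = i then 1 else 0)" if "i \<in> {1..k}" for i
    using that by force
  obtain m where "\<forall>i\<in>{1..k}.
      net_count \<chi> es i = m + (if ph then 1 else -1) * int (count_list (map \<chi> act) i)"
    using bal by auto
  moreover have "t = (\<not> ph)"
    using change by (auto split: if_splits)
  ultimately show ?thesis
    unfolding st using ys by auto
qed

lemma balanced_state_step:
  assumes "balanced_state \<chi> k es st"
    and "\<forall>C\<in>set (constraints (step k st e)). rainbow \<chi> k C"
  shows "balanced_state \<chi> k (es @ [e]) (step k st e)"
proof -
  obtain ph act n S where st: "st = (ph, act, n, S)" by (cases st) auto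
  obtain t J where e: "e = (t, J)" by (cases e) auto
  show ?thesis
    using assms unfolding st e
    by (metis balanced_state_step_same_phase balanced_state_step_phase_change)
qed

lemma balanced_state_run:
  assumes "\<forall>C\<in>set (constraints (run k es)). rainbow \<chi> k C"
  shows "balanced_state \<chi> k es (run k es)"
  using assms
proof (induction es rule: rev_induct)
  case (snoc e es)
  have "set (constraints (run k es)) \<subseteq> set (constraints (run k (es @ [e])))"
    using constraints_step_extends[of k "run k es" e] by auto
  with snoc have "balanced_state \<chi> k es (run k es)"
    by blast
  with snoc.prems show ?case
    by (simp add: balanced_state_step)
qed simp

lemma active_run_eq_Nil:
  assumes rb: "\<forall>C\<in>set (constraints (run k es)). rainbow \<chi> k C"
    and wf: "wf_state k es (run k es)"
    and zero: "\<forall>i\<in>{1..k}. net_count \<chi> es i = 0"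
    and colours: "\<chi> ` set (active (run k es)) \<subseteq> {1..k}"
  shows "active (run k es) = []"
proof -
  obtain ph act n S where st: "run k es = (ph, act, n, S)" by (cases "run k es") auto
  obtain m where m: "\<forall>i\<in>{1..k}.
      net_count \<chi> es i = m + (if ph then 1 else -1) * int (count_list (map \<chi> act) i)"
    using balanced_state_run[OF rb] st by auto
  \<comment> \<open>the active list has fewer than k elements, so it misses some colour, which forces m = 0\<close>
  have "card (\<chi> ` set act) < card {1..k}"
    using wf st card_image_le[of "set act" \<chi>] card_length[of act] by simp
  then have "\<not> {1..k} \<subseteq> \<chi> ` set act"
    by (meson card_mono finite_imageI finite_set leD)
  then obtain i0 where i0: "i0 \<in> {1..k}" "i0 \<notin> \<chi> ` set act"
    by blast
  then have "count_list (map \<chi> act) i0 = 0"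
    by (simp add: count_list_0_iff)
  with m i0(1) have "net_count \<chi> es i0 = m"
    by simp
  with zero i0(1) have "m = 0"
    by simp
  with m zero have "\<forall>i\<in>{1..k}. count_list (map \<chi> act) i = 0"
    by (auto split: if_splits)
  then have "\<chi> ` set act \<inter> {1..k} = {}"
    by (auto simp: count_list_0_iff)
  with colours st have "\<chi> ` set act = {}"
    by (simp add: Int_absorb2)
  with st show ?thesis
    by simp
qed

lemma net_count_take_balanced:
  assumes rb: "\<forall>C\<in>set (constraints (run k es)). rainbow \<chi> k C"
    and final: "active (run k es) = []"
    and ij: "i \<in> {1..k}" "j \<in> {1..k}"
  shows "\<bar>net_count \<chi> (take N es) i - net_count \<chi> (take N es) j\<bar> \<le> 1"
proof -
  define pre where "pre = take N es"
  have run_es: "run k es = foldl (step k) (run k pre) (drop N es)"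
    unfolding pre_def by (metis append_take_drop_id run_append)
  obtain ph act n S where st: "run k pre = (ph, act, n, S)" by (cases "run k pre") auto
  have "set (constraints (run k pre)) \<subseteq> set (constraints (run k es))"
    using constraints_foldl_step_extends[of k "run k pre" "drop N es"] run_es by auto
  with rb obtain m where m: "\<forall>i\<in>{1..k}.
      net_count \<chi> pre i = m + (if ph then 1 else -1) * int (count_list (map \<chi> act) i)"
    using balanced_state_run[of k pre \<chi>] st by auto
  \<comment> \<open>the active list is completed to a constraint before the scan ends\<close>
  have "(\<exists>c. active (run k es) = active (run k pre) @ c) \<or>
      (\<exists>c. active (run k pre) @ c \<in> set (constraints (run k es)))"
    using active_foldl_step_extends[of k "run k pre" "drop N es"] unfolding run_es .
  then have "distinct (map \<chi> act)"
    using rb final st by (auto simp: rainbow_def)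
  then have "count_list (map \<chi> act) i \<le> 1" "count_list (map \<chi> act) j \<le> 1"
    by (simp_all add: count_list_distinct)
  with m ij show ?thesis
    unfolding pre_def[symmetric] by (cases ph) auto
qed

lemma filter_eq_takeWhile_if_sorted_downward_closed:
  assumes "sorted (map f xs)" and down: "\<forall>a b. P b \<longrightarrow> a \<le> b \<longrightarrow> P a"
  shows "filter (\<lambda>x. P (f x)) xs = takeWhile (\<lambda>x. P (f x)) xs"
  using assms(1)
proof (induction xs)
  case (Cons x xs)
  show ?case
  proof (cases "P (f x)")
    case False
    with Cons.prems down have "\<forall>y\<in>set xs. \<not> P (f y)"
      by auto
    with False show ?thesis
      by (simp add: filter_empty_conv)
  qed (use Cons in simp)
qed simp

definition event_points :: "ivl set \<Rightarrow> (real \<times> bool \<times> ivl) set" where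
  "event_points I = (\<lambda>J. (fst J, True, J)) ` I \<union> (\<lambda>J. (snd J, False, J)) ` I"

lemma events_eq_map_snd: "events I = map snd (sorted_list_of_set (event_points I))"
proof -
  have "(\<lambda>(p, t, J). (t, J)) = (snd :: real \<times> bool \<times> ivl \<Rightarrow> bool \<times> ivl)"
    by auto
  then show ?thesis
    by (simp add: events_def event_points_def)
qed

lemma finite_event_points: "finite I \<Longrightarrow> finite (event_points I)"
  by (simp add: event_points_def)

lemma distinct_events:
  assumes "finite I"
  shows "distinct (events I)"
proof -
  have "inj_on snd (event_points I)"
    by (auto simp: inj_on_def event_points_def)
  with assms show ?thesis
    by (simp add: events_eq_map_snd distinct_map event_points_def)
qed

lemma set_events:
  assumes "finite I"
  shows "set (events I) = (\<lambda>J. (True, J)) ` I \<union> (\<lambda>J. (False, J)) ` I"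
  using assms by (simp add: events_eq_map_snd finite_event_points)
    (simp add: event_points_def image_Un image_image)

lemma set_take_events_downward_closed:
  assumes "finite I" and down: "\<forall>a b. P b \<longrightarrow> a \<le> b \<longrightarrow> P a"
  obtains N where "set (take N (events I)) =
    (\<lambda>J. (True, J)) ` {J\<in>I. P (fst J)} \<union> (\<lambda>J. (False, J)) ` {J\<in>I. P (snd J)}"
proof -
  define L where "L = sorted_list_of_set (event_points I)"
  define N where "N = length (takeWhile (\<lambda>x. P (fst x)) L)"
  have "sorted (map fst L)"
    unfolding L_def by (rule sorted_map_mono) (auto intro!: mono_onI simp: less_eq_prod_def)
  then have "take N (events I) = map snd (filter (\<lambda>x. P (fst x)) L)"
    using filter_eq_takeWhile_if_sorted_downward_closed[OF _ down]
    by (metis events_eq_map_snd L_def N_def take_map takeWhile_eq_take)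
  moreover have "{x \<in> event_points I. P (fst x)} =
      (\<lambda>J. (fst J, True, J)) ` {J\<in>I. P (fst J)} \<union> (\<lambda>J. (snd J, False, J)) ` {J\<in>I. P (snd J)}"
    by (auto simp: event_points_def)
  ultimately have "set (take N (events I)) =
      (\<lambda>J. (True, J)) ` {J\<in>I. P (fst J)} \<union> (\<lambda>J. (False, J)) ` {J\<in>I. P (snd J)}"
    using assms(1) by (simp add: L_def finite_event_points image_Un image_image)
  with that show ?thesis .
qed

lemma net_count_eq_card_diff:
  assumes "distinct es" and "set es = (\<lambda>J. (True, J)) ` A \<union> (\<lambda>J. (False, J)) ` B"
    and "finite A" and "finite B"
  shows "net_count \<chi> es i = int (card {J\<in>A. \<chi> (Inl J) = i}) - int (card {J\<in>B. \<chi> (Inl J) = i})"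
proof -
  define f :: "bool \<times> ivl \<Rightarrow> int"
    where "f = (\<lambda>(t, J). if \<chi> (Inl J) = i then if t then 1 else -1 else 0)"
  have "net_count \<chi> es i = sum f (set es)"
    using assms(1) by (simp add: net_count_def f_def sum_list_distinct_conv_sum_set)
  also have "\<dots> = sum f ((\<lambda>J. (True, J)) ` A) + sum f ((\<lambda>J. (False, J)) ` B)"
    unfolding assms(2) by (rule sum.union_disjoint) (use assms in auto)
  also have "\<dots> = (\<Sum>J\<in>A. if \<chi> (Inl J) = i then 1 else 0) - (\<Sum>J\<in>B. if \<chi> (Inl J) = i then 1 else 0)"
    by (simp add: sum.reindex inj_on_def f_def sum_negf[symmetric] if_distrib cong: if_cong)
  also have "\<dots> = int (card {J\<in>A. \<chi> (Inl J) = i}) - int (card {J\<in>B. \<chi> (Inl J) = i})"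
    using assms(3,4) by (simp add: sum.If_cases Int_def)
  finally show ?thesis .
qed

lemma color_count_eq_card_diff:
  assumes "finite I" and "\<forall>J\<in>I. fst J \<le> snd J"
    and down: "\<forall>a b. P b \<longrightarrow> a \<le> b \<longrightarrow> P a"
    and cut: "\<forall>J\<in>I. (P (fst J) \<and> \<not> P (snd J)) \<longleftrightarrow> (fst J \<le> x \<and> x \<le> snd J)"
  shows "int (color_count I c i x) =
    int (card {J\<in>I. P (fst J) \<and> c J = i}) - int (card {J\<in>I. P (snd J) \<and> c J = i})"
proof -
  define A where "A = {J\<in>I. P (fst J) \<and> c J = i}"
  define B where "B = {J\<in>I. P (snd J) \<and> c J = i}"
  have "B \<subseteq> A" and "finite A"
    using assms(1,2) down by (auto simp: A_def B_def)
  then have "card (A - B) = card A - card B" "card B \<le> card A"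
    by (simp_all add: card_Diff_subset finite_subset card_mono)
  moreover have "A - B = {J\<in>I. c J = i \<and> fst J \<le> x \<and> x \<le> snd J}"
    using cut by (auto simp: A_def B_def)
  ultimately show ?thesis
    unfolding color_count_def A_def[symmetric] B_def[symmetric] by (simp add: of_nat_diff)
qed

lemma obtain_cut:
  assumes "inj_on endpoint (I \<times> UNIV)"
  obtains P :: "real \<Rightarrow> bool" where "\<forall>a b. P b \<longrightarrow> a \<le> b \<longrightarrow> P a"
    and "\<forall>J\<in>I. (P (fst J) \<and> \<not> P (snd J)) \<longleftrightarrow> (fst J \<le> x \<and> x \<le> snd J)"
proof (cases "\<exists>J\<in>I. fst J = x")
  case True
  then obtain J0 where J0: "J0 \<in> I" "fst J0 = x"
    by blast
  have "snd J \<noteq> x" if "J \<in> I" for J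
  proof
    assume "snd J = x"
    with J0 have "endpoint (J, False) = endpoint (J0, True)"
      by (simp add: endpoint_def)
    with assms that J0(1) have "(J, False) = (J0, True)"
      by (auto dest: inj_onD)
    then show False
      by simp
  qed
  then show ?thesis
    by (intro that[of "\<lambda>p. p \<le> x"]) force+
next
  case False
  then show ?thesis
    by (intro that[of "\<lambda>p. p < x"]) force+
qed

lemma color_count_eq_net_count_take_events:
  assumes "finite I" and "\<forall>J\<in>I. fst J \<le> snd J" and "inj_on endpoint (I \<times> UNIV)"
  obtains N where "\<forall>c. net_count \<chi> (take N (events I)) c = int (color_count I (\<lambda>J. \<chi> (Inl J)) c x)"
proof -
  obtain P where down: "\<forall>a b. P b \<longrightarrow> a \<le> b \<longrightarrow> P a"
    and cut: "\<forall>J\<in>I. (P (fst J) \<and> \<not> P (snd J)) \<longleftrightarrow> (fst J \<le> x \<and> x \<le> snd J)"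
    using obtain_cut[OF assms(3)] .
  obtain N where "set (take N (events I)) =
      (\<lambda>J. (True, J)) ` {J\<in>I. P (fst J)} \<union> (\<lambda>J. (False, J)) ` {J\<in>I. P (snd J)}"
    using set_take_events_downward_closed[OF assms(1) down] .
  with assms(1) have "net_count \<chi> (take N (events I)) c = int (color_count I (\<lambda>J. \<chi> (Inl J)) c x)" for c
    using net_count_eq_card_diff color_count_eq_card_diff[OF assms(1,2) down cut]
    by (simp add: distinct_events)
  with that show ?thesis
    by blast
qed

lemma construction_in_ground_set:
  assumes "finite I" and "k \<ge> 1"
  shows "\<forall>C\<in>constr_S k I. length C = k \<and> distinct C \<and> set C \<subseteq> constr_X k I"
    and "set (active (construction k I)) \<subseteq> constr_X k I"
proof -
  obtain ph act n S where st: "run k (events I) = (ph, act, n, S)"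
    by (cases "run k (events I)") auto
  have "wf_state k (events I) (run k (events I))"
    using assms by (simp add: wf_state_run distinct_events)
  moreover have "Inl ` snd ` set (events I) \<union> Inr ` {..<n} = constr_X k I"
    using assms(1) st
    by (simp add: set_events constr_X_def construction_eq_run image_Un image_image atLeast0LessThan)
  ultimately show "\<forall>C\<in>constr_S k I. length C = k \<and> distinct C \<and> set C \<subseteq> constr_X k I"
    and "set (active (construction k I)) \<subseteq> constr_X k I"
    using st by (force simp: constr_S_def construction_eq_run)+
qed

theorem lemma3:
  fixes I :: "ivl set" and k :: nat and \<chi> :: "elem \<Rightarrow> nat"
  assumes "finite I"
    and "\<forall>J\<in>I. fst J \<le> snd J"
    and "inj_on endpoint (I \<times> UNIV)"
    and "k \<ge> 1"
    and "\<forall>x\<in>constr_X k I. \<chi> x \<in> {1..k}"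
    and "\<forall>S\<in>constr_S k I. \<forall>a\<in>set S. \<forall>b\<in>set S. a \<noteq> b \<longrightarrow> \<chi> a \<noteq> \<chi> b"
  shows "balanced_coloring I k (\<lambda>J. \<chi> (Inl J))"
proof -
  define E where "E = events I"
  have dist: "distinct E"
    using assms(1) by (simp add: E_def distinct_events)
  have rb: "\<forall>C\<in>set (constraints (run k E)). rainbow \<chi> k C"
    using construction_in_ground_set(1)[OF assms(1,4)] assms(5,6)
    by (fastforce simp: rainbow_def distinct_map inj_on_def constr_S_def construction_eq_run E_def)
  have "\<forall>i\<in>{1..k}. net_count \<chi> E i = 0"
    using assms(1) dist by (simp add: net_count_eq_card_diff E_def set_events)
  moreover have "\<chi> ` set (active (run k E)) \<subseteq> {1..k}"
    using construction_in_ground_set(2)[OF assms(1,4)] assms(5) by (auto simp: construction_eq_run E_def)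
  ultimately have final: "active (run k E) = []"
    using active_run_eq_Nil[OF rb wf_state_run[OF assms(4) dist]] by blast
  show ?thesis
    unfolding balanced_coloring_def
  proof (intro conjI ballI allI)
    fix J assume "J \<in> I"
    then show "\<chi> (Inl J) \<in> {1..k}"
      using assms(5) by (simp add: constr_X_def)
  next
    fix x :: real and i j assume "i \<in> {1..k}" "j \<in> {1..k}"
    moreover obtain N where "\<forall>c. net_count \<chi> (take N E) c = int (color_count I (\<lambda>J. \<chi> (Inl J)) c x)"
      using color_count_eq_net_count_take_events[OF assms(1-3)] unfolding E_def .
    ultimately show "\<bar>int (color_count I (\<lambda>J. \<chi> (Inl J)) i x) - int (color_count I (\<lambda>J. \<chi> (Inl J)) j x)\<bar> \<le> 1"
      using net_count_take_balanced[OF rb final] by metis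
  qed
qed

end
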